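(* Let $p$ be a prime, $m$ a positive integer, $e=1$, and $b\ge2$ an integer with $b\leq p$. Then $d_b(\mathcal{C}_i)=i+b$ for each $0\leq i\leq p-b$.
   Context: For $0\le i\le p^e$, $\mathcal{C}_i$ denotes the cyclic code $\langle (x-1)^i\rangle\subseteq \mathbb{F}_{p^m}[x]/\langle x^{p^e}-1\rangle$, with polynomials identified with their coefficient vectors in $\mathbb{F}_{p^m}^{p^e}$. For $c\in\mathbb{F}_{p^m}^{n}$, $\pi_b(c)$ is the list of the $n$ cyclically consecutive $b$-tuples $(c_j,\dots,c_{j+b-1})$ (indices mod $n$), $d_b(c,c')=d_H(\pi_b(c),\pi_b(c'))$, and $d_b(\mathcal{C})$ is the minimum of $d_b(c,c')$ over distinct $c,c'\in\mathcal{C}$. *)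

theory Defs
  imports "HOL-Computational_Algebra.Polynomial"
begin

definition coeff_vec :: "nat \<Rightarrow> 'a::field poly \<Rightarrow> 'a list" where
  "coeff_vec n q = map (coeff (q mod (monom 1 n - 1))) [0..<n]"

text \<open>The cyclic code C_i = ideal generated by (x-1)^i in F[x]/(x^(p^e) - 1),
  as a set of coefficient vectors of length p^e.\<close>
definition cyc_code :: "nat \<Rightarrow> nat \<Rightarrow> nat \<Rightarrow> 'a::field list set" where
  "cyc_code p e i = {coeff_vec (p ^ e) (f * [:-1, 1:] ^ i) | f. True}"

definition pi_b :: "nat \<Rightarrow> 'a list \<Rightarrow> 'a list list" where
  "pi_b b c = map (\<lambda>j. map (\<lambda>k. c ! ((j + k) mod length c)) [0..<b]) [0..<length c]"

definition hamming :: "'a list \<Rightarrow> 'a list \<Rightarrow> nat" where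
  "hamming xs ys = card {j. j < length xs \<and> xs ! j \<noteq> ys ! j}"

definition b_dist :: "nat \<Rightarrow> 'a list \<Rightarrow> 'a list \<Rightarrow> nat" where
  "b_dist b c c' = hamming (pi_b b c) (pi_b b c')"

definition b_min_dist :: "nat \<Rightarrow> 'a list set \<Rightarrow> nat" where
  "b_min_dist b C = Min {b_dist b c c' | c c'. c \<in> C \<and> c' \<in> C \<and> c \<noteq> c'}"

end

(* Since x^p - 1 = (x - 1)^p in characteristic p, the words of C_i are the coefficient
   vectors of the polynomials of degree < p divisible by (x - 1)^i.  Such a nonzero
   polynomial has more than i nonzero coefficients: either divide off a factor x, or
   differentiate, which lowers both the weight and the multiplicity of the root 1 by one.
   The b-symbol weight of a word with support S in Z/p counts the cyclic windows of
   length b meeting S, which is at least min p (|S| + b - 1); the generator (x - 1)^i,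
   supported in {0..i}, attains i + b. *)

theory Submission
  imports Defs "HOL-Number_Theory.Residues" "HOL-Computational_Algebra.Primes"
begin

hide_const (open) UnivPoly.monom UnivPoly.coeff Coset.order module.smult

definition poly_weight :: "'a::zero poly \<Rightarrow> nat" where
  "poly_weight q = card {k. coeff q k \<noteq> 0}"

lemma finite_coeff_support: "finite {k. coeff q k \<noteq> 0}"
  by (rule finite_subset[of _ "{..degree q}"]) (auto intro: le_degree)

lemma poly_weight_eq_0_iff [simp]: "poly_weight q = 0 \<longleftrightarrow> q = 0"
  using finite_coeff_support[of q] by (auto simp: poly_weight_def poly_eq_iff)

lemma poly_weight_pCons_0 [simp]: "poly_weight (pCons 0 q) = poly_weight q"
proof -
  have "{k. coeff (pCons 0 q) k \<noteq> 0} = Suc ` {k. coeff q k \<noteq> 0}"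
    by (auto simp: image_iff coeff_pCons gr0_conv_Suc split: nat.splits)
  then show ?thesis by (simp add: poly_weight_def card_image)
qed

lemma poly_weight_pCons:
  assumes "a \<noteq> 0"
  shows "poly_weight (pCons a q) = Suc (poly_weight q)"
proof -
  have "{k. coeff (pCons a q) k \<noteq> 0} = insert 0 (Suc ` {k. coeff q k \<noteq> 0})"
    using assms by (auto simp: image_iff coeff_pCons split: nat.splits) (metis not0_implies_Suc)
  then show ?thesis using finite_coeff_support[of q] by (simp add: poly_weight_def card_image)
qed

lemma poly_weight_pderiv_pCons:
  fixes q :: "'a::idom poly"
  assumes "CHAR('a) = 0 \<or> degree (pCons a q) < CHAR('a)"
  shows "poly_weight (pderiv (pCons a q)) = poly_weight q"
proof -
  have "of_nat (Suc k) * coeff q k \<noteq> 0 \<longleftrightarrow> coeff q k \<noteq> 0" for k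
  proof (cases "coeff q k = 0")
    case False
    then have "Suc k \<le> degree (pCons a q)"
      using le_degree[of q k] by (cases "q = 0") auto
    then have "\<not> CHAR('a) dvd Suc k" using assms by (auto dest: dvd_imp_le)
    then have "(of_nat (Suc k) :: 'a) \<noteq> 0" using of_nat_eq_0_iff_char_dvd by blast
    with False show ?thesis by simp
  qed simp
  then show ?thesis by (simp add: poly_weight_def coeff_pderiv)
qed

lemma linear_power_dvd_pCons_0:
  fixes q :: "'a::idom poly"
  assumes "[:-c, 1:] ^ n dvd pCons 0 q" and "c \<noteq> 0"
  shows "[:-c, 1:] ^ n dvd q"
proof (cases "q = 0")
  case False
  have "pCons 0 q = [:0, 1:] * q" by simp
  moreover have "order c [:0, 1:] = 0" using assms(2) by (intro order_0I) simp
  ultimately have "order c (pCons 0 q) = order c q"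
    using False by (simp add: order_mult del: mult_pCons_left)
  then show ?thesis using assms(1) False by (simp add: order_divides)
qed simp

lemma linear_power_Suc_dvd_imp_dvd_pderiv:
  fixes d :: "'a::idom poly"
  assumes "[:-c, 1:] ^ Suc i dvd d"
  shows "[:-c, 1:] ^ i dvd pderiv d"
proof -
  obtain h where h: "d = [:-c, 1:] ^ Suc i * h" using assms by blast
  have "pderiv d = [:-c, 1:] ^ i * (smult (of_nat (Suc i)) h + [:-c, 1:] * pderiv h)"
    unfolding h pderiv_mult pderiv_power_Suc by (simp add: pderiv_pCons algebra_simps)
  then show ?thesis by simp
qed

lemma degree_pderiv_less:
  fixes d :: "'a::idom poly"
  assumes "pderiv d \<noteq> 0"
  shows "degree (pderiv d) < degree d"
proof -
  have "degree d \<noteq> 0" using assms by (metis degree_eq_zeroE pderiv_singleton)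
  moreover have "degree (pderiv d) \<le> degree d - 1"
    by (rule degree_le) (simp add: coeff_pderiv coeff_eq_0)
  ultimately show ?thesis by linarith
qed

text \<open>The bound on the degree keeps differentiation from killing coefficients.\<close>

lemma poly_weight_gt_if_linear_power_dvd:
  fixes d :: "'a::idom poly"
  assumes "d \<noteq> 0" and "[:-c, 1:] ^ i dvd d" and "c \<noteq> 0"
    and "CHAR('a) = 0 \<or> degree d < CHAR('a)"
  shows "i < poly_weight d"
  using assms
proof (induction "degree d" arbitrary: d i rule: less_induct)
  case less
  obtain a q where d: "d = pCons a q" by (rule pCons_cases)
  show ?case
  proof (cases "a = 0")
    case True
    then have "q \<noteq> 0" "degree q < degree d" using less.prems(1) d by auto
    moreover have "[:-c, 1:] ^ i dvd q"
      using less.prems(2,3) d True by (simp add: linear_power_dvd_pCons_0)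
    ultimately have "i < poly_weight q" using less by auto
    then show ?thesis using d True by simp
  next
    case False
    show ?thesis
    proof (cases i)
      case (Suc j)
      have wq: "poly_weight (pderiv d) = poly_weight q"
        using less.prems(4) d by (simp add: poly_weight_pderiv_pCons)
      have "q \<noteq> 0"
      proof
        assume "q = 0"
        then have "[:-c, 1:] dvd [:a:]"
          using less.prems(2) d Suc by (meson dvd_power dvd_trans zero_less_Suc)
        then show False using False by (auto dest: dvd_imp_degree_le)
      qed
      then have "pderiv d \<noteq> 0" using wq by (metis poly_weight_eq_0_iff)
      moreover have "degree (pderiv d) < degree d" by (rule degree_pderiv_less) fact
      moreover have "[:-c, 1:] ^ j dvd pderiv d"
        using less.prems(2) Suc by (simp add: linear_power_Suc_dvd_imp_dvd_pderiv)
      ultimately have "j < poly_weight (pderiv d)" using less by auto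
      then show ?thesis using wq d False Suc by (simp add: poly_weight_pCons)
    qed (metis less.prems(1) gr0I poly_weight_eq_0_iff)
  qed
qed

lemma CHAR_eq_prime_if_card_eq_power:
  assumes "prime p" and "card (UNIV :: 'a::{finite,idom} set) = p ^ m"
  shows "CHAR('a) = p"
proof -
  have "prime CHAR('a)" by (intro prime_CHAR_semidom finite_imp_CHAR_pos) simp
  moreover have "CHAR('a) dvd p ^ m" using CHAR_dvd_CARD[where 'a='a] assms(2) by simp
  ultimately have "CHAR('a) dvd p" using prime_dvd_power by blast
  with \<open>prime CHAR('a)\<close> assms(1) show ?thesis using primes_dvd_imp_eq by blast
qed

lemma monom_CHAR_minus_1:
  assumes "prime CHAR('a::comm_ring_1)"
  shows "monom (1::'a) CHAR('a) - 1 = [:-1, 1:] ^ CHAR('a)"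
proof -
  have "[:-1, 1:] ^ CHAR('a) = (monom (1::'a) 1 + (-1)) ^ CHAR('a)"
    by (simp add: monom_Suc one_pCons)
  also have "\<dots> = monom 1 1 ^ CHAR('a) + (-1) ^ CHAR('a)"
    by (rule freshmans_dream) (simp_all add: assms)
  also have "(-1 :: 'a poly) ^ CHAR('a) = -1"
    using minus_power_prime_CHAR[of "CHAR('a)" "1::'a poly"] assms by simp
  finally show ?thesis by (simp add: monom_power)
qed

lemma coeff_vec_eq_if_degree_less:
  fixes q :: "'a::field poly"
  assumes "degree q < n"
  shows "coeff_vec n q = map (coeff q) [0..<n]"
proof -
  have "degree (monom (1::'a) n - 1) = n"
    using assms degree_add_eq_left[of "- 1 :: 'a poly" "monom 1 n"] by (simp add: degree_monom_eq)
  then show ?thesis using assms by (simp add: coeff_vec_def mod_poly_less)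
qed

definition b_support :: "nat \<Rightarrow> nat \<Rightarrow> nat set \<Rightarrow> nat set" where
  "b_support n b S = {j. j < n \<and> (\<exists>k<b. (j + k) mod n \<in> S)}"

lemma b_support_subset_lessThan: "b_support n b S \<subseteq> {..<n}"
  by (auto simp: b_support_def)

lemma finite_b_support [simp]: "finite (b_support n b S)"
  by (rule finite_subset[OF b_support_subset_lessThan]) simp

lemma b_support_mono: "b \<le> b' \<Longrightarrow> S \<subseteq> T \<Longrightarrow> b_support n b S \<subseteq> b_support n b' T"
  unfolding b_support_def by (blast dest: less_le_trans)

lemma b_support_1: "S \<subseteq> {..<n} \<Longrightarrow> b_support n 1 S = S"
  by (auto simp: b_support_def)

lemma b_support_Suc_shift:
  assumes "j < n" and "Suc j mod n \<in> b_support n b S"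
  shows "j \<in> b_support n (Suc b) S"
proof -
  obtain k where "k < b" and "(Suc j mod n + k) mod n \<in> S"
    using assms(2) by (auto simp: b_support_def)
  moreover have "(Suc j mod n + k) mod n = (j + Suc k) mod n" by (simp add: mod_add_left_eq)
  ultimately show ?thesis using assms(1) by (auto simp: b_support_def)
qed

lemma pred_closed_eq_lessThan:
  assumes "A \<subseteq> {..<n}" and "a \<in> A" and closed: "\<And>j. j < n \<Longrightarrow> Suc j mod n \<in> A \<Longrightarrow> j \<in> A"
  shows "A = {..<n}"
proof -
  have reach: "j \<in> A" if "j < n" and "(j + d) mod n \<in> A" for j d
    using that
  proof (induction d arbitrary: j)
    case (Suc d)
    have "(Suc j mod n + d) mod n = (j + Suc d) mod n" by (simp add: mod_add_left_eq)
    then have "Suc j mod n \<in> A" using Suc.IH[of "Suc j mod n"] Suc.prems by simp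
    then show ?case using Suc.prems(1) closed by blast
  qed simp
  have "a < n" using assms(1,2) by auto
  have "j \<in> A" if "j < n" for j
  proof (rule reach[OF that])
    have "j + (a + n - j) = a + n" using that by simp
    then show "(j + (a + n - j)) mod n \<in> A" using \<open>a < n\<close> assms(2) by simp
  qed
  then show ?thesis using assms(1) by blast
qed

text \<open>Lengthening the windows by one adds a new start position until all of them are
  covered, since a proper nonempty subset of Z/n is not closed under predecessor.\<close>

lemma card_b_support_ge:
  assumes "S \<subseteq> {..<n}" and "S \<noteq> {}" and "1 \<le> b"
  shows "min n (card S + b - 1) \<le> card (b_support n b S)"
  using assms(3)
proof (induction b rule: dec_induct)
  case base
  then show ?case using b_support_1[OF assms(1)] by simp
next
  case (step b)
  let ?A = "b_support n b S" and ?B = "b_support n (Suc b) S"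
  have AB: "?A \<subseteq> ?B" by (rule b_support_mono) auto
  show ?case
  proof (cases "?A = {..<n}")
    case True
    then have "?B = {..<n}" using AB b_support_subset_lessThan[of n "Suc b" S] by auto
    then show ?thesis by simp
  next
    case False
    have "S \<subseteq> ?A" using b_support_mono[of 1 b S S n] step.hyps b_support_1[OF assms(1)] by simp
    then obtain a where "a \<in> ?A" using assms(2) by auto
    then obtain j where j: "j < n" "Suc j mod n \<in> ?A" "j \<notin> ?A"
      using pred_closed_eq_lessThan[OF b_support_subset_lessThan, of a n b S] False by auto
    have "card (insert j ?A) \<le> card ?B"
      using AB j b_support_Suc_shift by (intro card_mono) auto
    then show ?thesis using step.IH j(3) by simp
  qed
qed

lemma card_b_support_atMost_le:
  assumes "i + b \<le> n" and "1 \<le> b"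
  shows "card (b_support n b {..i}) \<le> i + b"
proof -
  have "b_support n b {..i} \<subseteq> {..i} \<union> {n - b + 1..<n}"
  proof
    fix j assume "j \<in> b_support n b {..i}"
    then obtain k where k: "j < n" "k < b" "(j + k) mod n \<le> i" by (auto simp: b_support_def)
    show "j \<in> {..i} \<union> {n - b + 1..<n}"
    proof (rule ccontr)
      assume "j \<notin> {..i} \<union> {n - b + 1..<n}"
      then have "i < j" "j + k < n" using k assms by auto
      then show False using k by simp
    qed
  qed
  then have "card (b_support n b {..i}) \<le> card ({..i} \<union> {n - b + 1..<n})" by (intro card_mono) auto
  also have "\<dots> \<le> card {..i} + card {n - b + 1..<n}" by (rule card_Un_le)
  also have "\<dots> = i + b" using assms by simp
  finally show ?thesis .
qed

lemma b_dist_eq_card_b_support: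
  assumes "length c = n" and "length c' = n"
  shows "b_dist b c c' = card (b_support n b {k. k < n \<and> c ! k \<noteq> c' ! k})"
proof -
  have "pi_b b c ! j \<noteq> pi_b b c' ! j \<longleftrightarrow> j \<in> b_support n b {k. k < n \<and> c ! k \<noteq> c' ! k}"
    if "j < n" for j
  proof -
    have "pi_b b c ! j \<noteq> pi_b b c' ! j \<longleftrightarrow> (\<exists>k<b. c ! ((j + k) mod n) \<noteq> c' ! ((j + k) mod n))"
      using that assms by (simp add: pi_b_def map_eq_conv Bex_def)
    moreover have "(j + k) mod n < n" for k using that by simp
    ultimately show ?thesis using that unfolding b_support_def by blast
  qed
  moreover have "length (pi_b b c) = n" using assms(1) by (simp add: pi_b_def)
  moreover have "b_support n b {k. k < n \<and> c ! k \<noteq> c' ! k} \<subseteq> {..<n}"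
    by (rule b_support_subset_lessThan)
  ultimately have "{j. j < length (pi_b b c) \<and> pi_b b c ! j \<noteq> pi_b b c' ! j}
      = b_support n b {k. k < n \<and> c ! k \<noteq> c' ! k}"
    by auto
  then show ?thesis by (simp add: b_dist_def hamming_def)
qed

lemma cyc_code_elem_CHAR:
  fixes c :: "'a::field list"
  assumes "CHAR('a) = p" and "prime p" and "i \<le> p" and "c \<in> cyc_code p 1 i"
  shows "\<exists>r. [:-1, 1:] ^ i dvd r \<and> degree r < p \<and> c = map (coeff r) [0..<p]"
proof -
  obtain f :: "'a poly" where c: "c = coeff_vec p (f * [:-1, 1:] ^ i)"
    using assms(4) by (auto simp: cyc_code_def)
  define r where "r = (f * [:-1, 1:] ^ i) mod [:-1, 1:] ^ p"
  have "monom 1 p - 1 = [:-1, 1::'a:] ^ p" using monom_CHAR_minus_1[where 'a='a] assms(1,2) by simp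
  then have "c = map (coeff r) [0..<p]" by (simp add: c coeff_vec_def r_def)
  moreover have "r = 0 \<or> degree r < p"
    using degree_mod_less[of "[:-1, 1::'a:] ^ p"] by (simp add: r_def degree_linear_power)
  then have "degree r < p" using assms(2) prime_gt_0_nat by auto
  moreover have "[:-1, 1:] ^ i dvd r"
    unfolding r_def by (rule dvd_mod) (simp_all add: le_imp_power_dvd assms(3))
  ultimately show ?thesis by blast
qed

lemma length_cyc_code: "c \<in> cyc_code n e i \<Longrightarrow> length c = n ^ e"
  by (auto simp: cyc_code_def coeff_vec_def)

lemma b_dist_cyc_code_ge:
  fixes c c' :: "'a::field list"
  assumes "CHAR('a) = p" and "prime p" and "i + b \<le> p" and "1 \<le> b"
    and "c \<in> cyc_code p 1 i" and "c' \<in> cyc_code p 1 i" and "c \<noteq> c'"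
  shows "i + b \<le> b_dist b c c'"
proof -
  obtain r where r: "[:-1, 1:] ^ i dvd r" "degree r < p" "c = map (coeff r) [0..<p]"
    using cyc_code_elem_CHAR assms(1,2,3,5) by (metis add_leD1)
  obtain r' where r': "[:-1, 1:] ^ i dvd r'" "degree r' < p" "c' = map (coeff r') [0..<p]"
    using cyc_code_elem_CHAR assms(1,2,3,6) by (metis add_leD1)
  define S where "S = {k. k < p \<and> c ! k \<noteq> c' ! k}"
  have "coeff (r - r') k \<noteq> 0 \<longleftrightarrow> k \<in> S" for k
  proof (cases "k < p")
    case False
    then show ?thesis using r(2) r'(2) by (simp add: S_def coeff_eq_0)
  qed (simp add: S_def r(3) r'(3))
  then have "{k. coeff (r - r') k \<noteq> 0} = S" by blast
  then have weight: "poly_weight (r - r') = card S" by (simp add: poly_weight_def)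
  have "r \<noteq> r'" using assms(7) r(3) r'(3) by blast
  moreover have "degree (r - r') < CHAR('a)"
    using r(2) r'(2) assms(1) degree_diff_le_max[of r r'] by linarith
  ultimately have "i < card S"
    using poly_weight_gt_if_linear_power_dvd[of "r - r'" 1 i] r(1) r'(1) weight
    by (simp add: dvd_diff)
  moreover have "S \<noteq> {}" using \<open>i < card S\<close> by auto
  then have "min p (card S + b - 1) \<le> card (b_support p b S)"
    using assms(4) by (intro card_b_support_ge) (auto simp: S_def)
  moreover have "b_dist b c c' = card (b_support p b S)"
    using r(3) r'(3) by (simp add: S_def b_dist_eq_card_b_support)
  ultimately show ?thesis using assms(3,4) by linarith
qed

lemma b_dist_coeff_vec_0_le:
  fixes q :: "'a::field poly"
  assumes "degree q \<le> i" and "i + b \<le> n" and "1 \<le> b"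
  shows "b_dist b (coeff_vec n q) (coeff_vec n 0) \<le> i + b"
proof -
  have q: "coeff_vec n q = map (coeff q) [0..<n]"
    using assms by (intro coeff_vec_eq_if_degree_less) simp
  have z: "coeff_vec n 0 = map (coeff 0) [0..<n]" by (simp add: coeff_vec_def)
  have "{k. k < n \<and> coeff_vec n q ! k \<noteq> coeff_vec n 0 ! k} \<subseteq> {..i}"
    using assms(1) by (auto simp: q z) (meson le_degree order_trans)
  then have "b_dist b (coeff_vec n q) (coeff_vec n 0) \<le> card (b_support n b {..i})"
    by (simp add: b_dist_eq_card_b_support q z card_mono b_support_mono)
  also have "\<dots> \<le> i + b" using assms(2,3) by (rule card_b_support_atMost_le)
  finally show ?thesis .
qed

lemma b_dist_le_length:
  assumes "length c = length c'"
  shows "b_dist b c c' \<le> length c"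
  using assms b_dist_eq_card_b_support card_mono[OF _ b_support_subset_lessThan] by fastforce

lemma b_min_dist_eqI:
  assumes "\<And>c. c \<in> C \<Longrightarrow> length c = n"
    and "c0 \<in> C" and "c1 \<in> C" and "c0 \<noteq> c1" and "b_dist b c0 c1 \<le> d"
    and "\<And>c c'. c \<in> C \<Longrightarrow> c' \<in> C \<Longrightarrow> c \<noteq> c' \<Longrightarrow> d \<le> b_dist b c c'"
  shows "b_min_dist b C = d"
proof -
  let ?D = "{b_dist b c c' | c c'. c \<in> C \<and> c' \<in> C \<and> c \<noteq> c'}"
  have "?D \<subseteq> {..n}"
  proof
    fix x assume "x \<in> ?D"
    then obtain c c' where "x = b_dist b c c'" "c \<in> C" "c' \<in> C" by blast
    then show "x \<in> {..n}" using assms(1) b_dist_le_length[of c c' b] by simp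
  qed
  then have "finite ?D" by (rule finite_subset) simp
  moreover have "d \<in> ?D" using assms(2-6) by (metis (mono_tags, lifting) mem_Collect_eq order_antisym)
  ultimately show ?thesis unfolding b_min_dist_def using assms(6) by (intro Min_eqI) auto
qed

theorem proposition2p7:
  fixes p m b i :: nat
  assumes "prime p" and "m > 0" and "card (UNIV :: 'a set) = p ^ m"
    and "2 \<le> b" and "b \<le> p" and "i \<le> p - b"
  shows "b_min_dist b (cyc_code p 1 i :: ('a::{finite,field}) list set) = i + b"
proof -
  have char: "CHAR('a) = p" using CHAR_eq_prime_if_card_eq_power assms(1,3) .
  have ib: "i + b \<le> p" and b: "1 \<le> b" using assms(4-6) by auto
  let ?g = "coeff_vec p ([:-1, 1::'a:] ^ i)" and ?z = "coeff_vec p (0::'a poly)"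
  have code: "?g \<in> cyc_code p 1 i" "?z \<in> cyc_code p 1 i"
    unfolding cyc_code_def by (auto intro: exI[of _ 1] exI[of _ 0])
  have "?g ! i = 1" using ib b
    by (simp add: coeff_vec_eq_if_degree_less degree_linear_power coeff_linear_power)
  moreover have "?z ! i = 0" using ib b by (simp add: coeff_vec_def)
  ultimately have "?g \<noteq> ?z" by auto
  moreover have "b_dist b ?g ?z \<le> i + b"
    using ib b by (intro b_dist_coeff_vec_0_le) (simp_all add: degree_linear_power)
  ultimately show ?thesis
    using b_dist_cyc_code_ge[OF char assms(1) ib b] code length_cyc_code[of _ p 1 i]
    by (intro b_min_dist_eqI[where n = p]) auto
qed

end
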